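(* Let $\gamma>0$ and $r,k\in\mathbb{N}$ with $2\leq k\leq r$ and $r^*:=r/k\in\mathbb{N}$. Let $J_1$ be the complete $(r^*+1)$-partite graph with $r^*$ parts of size $k$ and one part of size $1$, with distinguished vertices $w_1$ (the unique vertex of the part of size $1$) and $w_2$ (a vertex in one of the parts of size $k$). Let $H_1$ be the graph obtained from $J_1$ by deleting the edge $w_1w_2$, with distinguished ordered pair $(w_1,w_2)$, and let $H_1'$ be the same graph with the roles of the distinguished vertices switched, i.e. with distinguished ordered pair $(w_2,w_1)$. Let $\bm{H_1}:=(H_1,H_1')$. Then there exists $\beta_1=\beta_1(r,k,\gamma)>0$ such that for all sufficiently large $n$ and every $n$-vertex graph $G$ with $\delta(G)\geq(1-\frac{k}{r}+\gamma)n$, every pair of distinct vertices of $G$ is $(\bm{H_1};\beta_1)$-reachable.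
   Context: Let $\bm{H}=(H^1,\dots,H^t)$ be a vector of $(r+1)$-vertex graphs, each $H^i$ with an ordered pair of distinct distinguished vertices $(w_1^i,w_2^i)$. An $\bm{H}$-path is the graph obtained by taking vertex-disjoint copies of $H^1,\dots,H^t$ and identifying $w_2^i$ with $w_1^{i+1}$ for each $i\in[t-1]$; its endpoints are $w_1^1$ and $w_2^t$. Two vertices $x,y$ of an $n$-vertex graph $G$ are $(\bm{H};\beta)$-reachable if there are at least $\beta n^{tr-1}$ distinct labelled embeddings (injective maps sending edges to edges) of the $\bm{H}$-path into $G$ such that the endpoints of the path are mapped to $\{x,y\}$. *)

theory Defs
  imports Complex_Main "HOL-Library.FuncSet"
begin

definition simple_graph :: "'a set \<Rightarrow> ('a \<Rightarrow> 'a \<Rightarrow> bool) \<Rightarrow> bool" where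
  "simple_graph V E \<longleftrightarrow> finite V \<and>
     (\<forall>u v. E u v \<longrightarrow> u \<in> V \<and> v \<in> V \<and> u \<noteq> v \<and> E v u)"

definition degree :: "'a set \<Rightarrow> ('a \<Rightarrow> 'a \<Rightarrow> bool) \<Rightarrow> 'a \<Rightarrow> nat" where
  "degree V E v = card {u \<in> V. E v u}"

text \<open>An (r+1)-vertex graph on vertex set {0..r} with an ordered pair of
  distinguished vertices (rw1, rw2).\<close>
record rgraph =
  rw1 :: nat
  rw2 :: nat
  radj :: "nat \<Rightarrow> nat \<Rightarrow> bool"

text \<open>H-path for a list Hs = [H^1,...,H^t] of rooted graphs on {0..r}:
  disjoint copies (i,v), i < t, v \<le> r, where the copy of w_1 in H^{i+1}
  (i.e. (i, rw1 (Hs!i)) for i > 0) is identified with the copy of w_2 in H^i.\<close>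
definition hpath_rep :: "rgraph list \<Rightarrow> nat \<times> nat \<Rightarrow> nat \<times> nat" where
  "hpath_rep Hs p = (case p of (i, v) \<Rightarrow>
     if 0 < i \<and> v = rw1 (Hs ! i) then (i - 1, rw2 (Hs ! (i - 1))) else (i, v))"

definition hpath_verts :: "rgraph list \<Rightarrow> nat \<Rightarrow> (nat \<times> nat) set" where
  "hpath_verts Hs r = {(i, v). i < length Hs \<and> v \<le> r \<and> \<not> (0 < i \<and> v = rw1 (Hs ! i))}"

definition hpath_edge :: "rgraph list \<Rightarrow> nat \<Rightarrow> nat \<times> nat \<Rightarrow> nat \<times> nat \<Rightarrow> bool" where
  "hpath_edge Hs r a b \<longleftrightarrow> (\<exists>i < length Hs. \<exists>u \<le> r. \<exists>v \<le> r.
      radj (Hs ! i) u v \<and> a = hpath_rep Hs (i, u) \<and> b = hpath_rep Hs (i, v))"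

definition hpath_end1 :: "rgraph list \<Rightarrow> nat \<times> nat" where
  "hpath_end1 Hs = (0, rw1 (Hs ! 0))"

definition hpath_end2 :: "rgraph list \<Rightarrow> nat \<times> nat" where
  "hpath_end2 Hs = (length Hs - 1, rw2 (Hs ! (length Hs - 1)))"

definition hpath_embeddings ::
  "'a set \<Rightarrow> ('a \<Rightarrow> 'a \<Rightarrow> bool) \<Rightarrow> rgraph list \<Rightarrow> nat \<Rightarrow> 'a \<Rightarrow> 'a \<Rightarrow> ((nat \<times> nat) \<Rightarrow> 'a) set" where
  "hpath_embeddings V E Hs r x y =
     {\<phi> \<in> hpath_verts Hs r \<rightarrow>\<^sub>E V. inj_on \<phi> (hpath_verts Hs r) \<and>
        (\<forall>a b. hpath_edge Hs r a b \<longrightarrow> E (\<phi> a) (\<phi> b)) \<and>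
        {\<phi> (hpath_end1 Hs), \<phi> (hpath_end2 Hs)} = {x, y}}"

definition reachable ::
  "'a set \<Rightarrow> ('a \<Rightarrow> 'a \<Rightarrow> bool) \<Rightarrow> rgraph list \<Rightarrow> nat \<Rightarrow> real \<Rightarrow> 'a \<Rightarrow> 'a \<Rightarrow> bool" where
  "reachable V E Hs r \<beta> x y \<longleftrightarrow>
     real (card (hpath_embeddings V E Hs r x y)) \<ge> \<beta> * real (card V) ^ (length Hs * r - 1)"

text \<open>J_1: vertex 0 is the part of size 1 (w_1); vertices 1..r form r/k parts of
  size k, vertex i belonging to part Suc ((i-1) div k); w_2 = vertex 1.\<close>
definition J1_part :: "nat \<Rightarrow> nat \<Rightarrow> nat" where
  "J1_part k i = (if i = 0 then 0 else Suc ((i - 1) div k))"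

definition J1_adj :: "nat \<Rightarrow> nat \<Rightarrow> nat \<Rightarrow> nat \<Rightarrow> bool" where
  "J1_adj r k u v \<longleftrightarrow> u \<le> r \<and> v \<le> r \<and> J1_part k u \<noteq> J1_part k v"

definition H1_adj :: "nat \<Rightarrow> nat \<Rightarrow> nat \<Rightarrow> nat \<Rightarrow> bool" where
  "H1_adj r k u v \<longleftrightarrow> J1_adj r k u v \<and> {u, v} \<noteq> {0, 1}"

definition H1 :: "nat \<Rightarrow> nat \<Rightarrow> rgraph" where
  "H1 r k = \<lparr>rw1 = 0, rw2 = 1, radj = H1_adj r k\<rparr>"

definition H1' :: "nat \<Rightarrow> nat \<Rightarrow> rgraph" where
  "H1' r k = \<lparr>rw1 = 1, rw2 = 0, radj = H1_adj r k\<rparr>"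

end

theory Submission
  imports Defs
begin

text \<open>Fix the vertex m at which the two copies of H_1 meet and write t = r/k. A copy of H_1 rooted
  at (x, m) is a homomorphism of a complete t-partite graph on the remaining r - 1 vertices, each part
  being mapped into the common neighbourhood of x and m (of x alone for the part of w_2). By the minimum
  degree condition any t vertices have at least \<gamma>n common neighbours, so a greedy embedding yields
  (\<gamma>n)^t transversals, and blowing the parts up one at a time by the usual averaging argument yields
  c n^(r-1) rooted copies. Pairing the copies rooted at (x, m) and (y, m) and summing over m gives
  c^2 n^(2r-1) homomorphisms of the path, of which only O(n^(2r-2)) fail to be injective.\<close>

lemma simple_graph_symp: "simple_graph V E \<Longrightarrow> symp E"
  by (auto simp: simple_graph_def symp_def)

definition common_nbhd :: "'a set \<Rightarrow> ('a \<Rightarrow> 'a \<Rightarrow> bool) \<Rightarrow> 'a set \<Rightarrow> 'a set" where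
  "common_nbhd V E S = {u \<in> V. \<forall>s\<in>S. E s u}"

lemma card_common_nbhd_ge:
  fixes d :: real
  assumes "finite V" and "S \<subseteq> V" and "\<forall>s\<in>S. real (card V) - d \<le> real (degree V E s)"
  shows "real (card V) - real (card S) * d \<le> real (card (common_nbhd V E S))"
proof -
  have "finite S" using assms(1,2) finite_subset by blast
  have non_nbrs: "real (card (V - {u \<in> V. E s u})) = real (card V) - real (degree V E s)" for s
    using assms(1) by (simp add: degree_def card_Diff_subset card_mono)
  have "V - common_nbhd V E S = (\<Union>s\<in>S. V - {u \<in> V. E s u})"
    by (auto simp: common_nbhd_def)
  then have "card (V - common_nbhd V E S) \<le> (\<Sum>s\<in>S. card (V - {u \<in> V. E s u}))"
    by (metis card_UN_le[OF \<open>finite S\<close>])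
  then have "real (card (V - common_nbhd V E S)) \<le> (\<Sum>s\<in>S. real (card (V - {u \<in> V. E s u})))"
    by (metis of_nat_mono of_nat_sum)
  also have "\<dots> \<le> (\<Sum>s\<in>S. d)"
    using assms(3) non_nbrs by (intro sum_mono) auto
  finally show ?thesis
    using assms(1) by (simp add: card_Diff_subset common_nbhd_def card_mono)
qed

lemma card_common_nbhd_ge_min_degree:
  fixes \<gamma> :: real
  assumes "finite V" and "V \<noteq> {}" and "S \<subseteq> V" and "card S \<le> t" and "t \<ge> 1" and "\<gamma> \<ge> 0"
    and "\<forall>v\<in>V. (1 - 1 / real t + \<gamma>) * real (card V) \<le> real (degree V E v)"
  shows "\<gamma> * real (card V) \<le> real (card (common_nbhd V E S))"
proof -
  let ?n = "real (card V)"
  define d where "d = (1 / real t - \<gamma>) * ?n"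
  have deg: "\<forall>v\<in>V. ?n - d \<le> real (degree V E v)"
    using assms(7) by (simp add: d_def algebra_simps)
  obtain v where "v \<in> V" using assms(2) by blast
  moreover have "real (degree V E v) \<le> ?n"
    using assms(1) by (simp add: degree_def card_mono)
  ultimately have "d \<ge> 0" using deg by fastforce
  have "\<gamma> * ?n \<le> real t * \<gamma> * ?n"
    using assms(5,6) mult_right_mono[of 1 "real t" \<gamma>] by (intro mult_right_mono) auto
  also have "\<dots> = ?n - real t * d"
    using assms(5) by (simp add: d_def field_simps)
  also have "\<dots> \<le> ?n - real (card S) * d"
    using assms(4) \<open>d \<ge> 0\<close> by (simp add: mult_right_mono)
  also have "\<dots> \<le> real (card (common_nbhd V E S))"
    using assms(1,3) deg by (intro card_common_nbhd_ge) auto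
  finally show ?thesis .
qed

definition partite_homs ::
  "'a set \<Rightarrow> ('a \<Rightarrow> 'a \<Rightarrow> bool) \<Rightarrow> ('p \<Rightarrow> nat) \<Rightarrow> (nat \<Rightarrow> 'a set) \<Rightarrow> 'p set \<Rightarrow> ('p \<Rightarrow> 'a) set" where
  "partite_homs V E \<pi> W D = {f \<in> D \<rightarrow>\<^sub>E V. (\<forall>p\<in>D. f p \<in> W (\<pi> p)) \<and>
     (\<forall>p\<in>D. \<forall>q\<in>D. \<pi> p \<noteq> \<pi> q \<longrightarrow> E (f p) (f q))}"

definition partite_exts ::
  "'a set \<Rightarrow> ('a \<Rightarrow> 'a \<Rightarrow> bool) \<Rightarrow> (nat \<Rightarrow> 'a set) \<Rightarrow> 'p set \<Rightarrow> nat \<Rightarrow> ('p \<Rightarrow> 'a) \<Rightarrow> 'a set" where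
  "partite_exts V E W D i h = {u \<in> V. u \<in> W i \<and> (\<forall>q\<in>D. E (h q) u)}"

lemma finite_partite_homs: "finite D \<Longrightarrow> finite V \<Longrightarrow> finite (partite_homs V E \<pi> W D)"
  unfolding partite_homs_def by (rule finite_subset[of _ "D \<rightarrow>\<^sub>E V"]) (auto intro: finite_PiE)

lemma card_partite_homs_le:
  assumes "finite D" and "finite V"
  shows "card (partite_homs V E \<pi> W D) \<le> card V ^ card D"
proof -
  have "card (partite_homs V E \<pi> W D) \<le> card (D \<rightarrow>\<^sub>E V)"
    unfolding partite_homs_def using assms by (intro card_mono finite_PiE) auto
  also have "\<dots> = card V ^ card D" using assms by (simp add: card_PiE)
  finally show ?thesis .
qed

lemma card_partite_exts_le: "finite V \<Longrightarrow> card (partite_exts V E W D i h) \<le> card V"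
  unfolding partite_exts_def by (rule card_mono) auto

lemma card_partite_homs_Un_part:
  assumes "finite D" and "finite B" and "finite V" and "symp E"
    and "\<forall>p\<in>D. \<pi> p \<noteq> i" and "\<forall>b\<in>B. \<pi> b = i"
  shows "card (partite_homs V E \<pi> W (D \<union> B)) =
           (\<Sum>h\<in>partite_homs V E \<pi> W D. card (partite_exts V E W D i h) ^ card B)"
proof -
  let ?ext = "partite_exts V E W D i"
  let ?split = "\<lambda>f. (restrict f D, restrict f B)"
  let ?merge = "\<lambda>(h, g). \<lambda>p. if p \<in> D then h p else g p"
  have DB: "D \<inter> B = {}" using assms(5,6) by auto
  have "bij_betw ?split (partite_homs V E \<pi> W (D \<union> B))
          (SIGMA h:partite_homs V E \<pi> W D. B \<rightarrow>\<^sub>E ?ext h)"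
  proof (rule bij_betw_byWitness[where f' = ?merge])
    show "\<forall>f\<in>partite_homs V E \<pi> W (D \<union> B). ?merge (?split f) = f"
      by (auto simp: partite_homs_def PiE_def extensional_def fun_eq_iff)
    show "\<forall>hg\<in>SIGMA h:partite_homs V E \<pi> W D. B \<rightarrow>\<^sub>E ?ext h. ?split (?merge hg) = hg"
      using DB by (fastforce simp: partite_homs_def PiE_def extensional_def fun_eq_iff)
    show "?split ` partite_homs V E \<pi> W (D \<union> B) \<subseteq> (SIGMA h:partite_homs V E \<pi> W D. B \<rightarrow>\<^sub>E ?ext h)"
    proof (rule image_subsetI)
      fix f assume f: "f \<in> partite_homs V E \<pi> W (D \<union> B)"
      have "restrict f D \<in> partite_homs V E \<pi> W D"
        using f by (auto simp: partite_homs_def)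
      moreover have "restrict f B \<in> B \<rightarrow>\<^sub>E ?ext (restrict f D)"
        using f assms(5,6) by (fastforce simp: partite_homs_def partite_exts_def)
      ultimately show "?split f \<in> (SIGMA h:partite_homs V E \<pi> W D. B \<rightarrow>\<^sub>E ?ext h)" by blast
    qed
    show "?merge ` (SIGMA h:partite_homs V E \<pi> W D. B \<rightarrow>\<^sub>E ?ext h) \<subseteq> partite_homs V E \<pi> W (D \<union> B)"
    proof clarify
      fix h g assume h: "h \<in> partite_homs V E \<pi> W D" and g: "g \<in> B \<rightarrow>\<^sub>E ?ext h"
      let ?f = "\<lambda>p. if p \<in> D then h p else g p"
      have "?f \<in> (D \<union> B) \<rightarrow>\<^sub>E V" and "\<forall>p\<in>D \<union> B. ?f p \<in> W (\<pi> p)"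
        using h g assms(6) by (auto simp: partite_homs_def partite_exts_def PiE_iff extensional_def)
      moreover have "E (?f p) (?f q)" if "p \<in> D \<union> B" "q \<in> D \<union> B" "\<pi> p \<noteq> \<pi> q" for p q
        using that h g assms(5,6)
        by (auto simp: partite_homs_def partite_exts_def PiE_iff) (meson assms(4) sympD)
      ultimately show "?f \<in> partite_homs V E \<pi> W (D \<union> B)"
        by (simp add: partite_homs_def)
    qed
  qed
  then have "card (partite_homs V E \<pi> W (D \<union> B)) =
               card (SIGMA h:partite_homs V E \<pi> W D. B \<rightarrow>\<^sub>E ?ext h)"
    by (rule bij_betw_same_card)
  also have "\<dots> = (\<Sum>h\<in>partite_homs V E \<pi> W D. card (?ext h) ^ card B)"
    using assms(1-3)
    by (simp add: finite_partite_homs finite_PiE partite_exts_def card_PiE)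
  finally show ?thesis .
qed

lemma card_transversal_homs_ge:
  assumes "finite V" and "symp E" and "L \<ge> 0" and "\<And>P. P < t \<Longrightarrow> \<pi> (rep P) = P"
    and "\<And>P h. P < t \<Longrightarrow> h \<in> partite_homs V E \<pi> W (rep ` {..<P}) \<Longrightarrow>
           L \<le> real (card (partite_exts V E W (rep ` {..<P}) P h))"
  shows "L ^ t \<le> real (card (partite_homs V E \<pi> W (rep ` {..<t})))"
  using assms(4,5)
proof (induction t)
  case 0
  then show ?case by (simp add: partite_homs_def)
next
  case (Suc t)
  let ?D = "rep ` {..<t}"
  have "card (partite_homs V E \<pi> W (?D \<union> {rep t})) =
          (\<Sum>h\<in>partite_homs V E \<pi> W ?D. card (partite_exts V E W ?D t h) ^ card {rep t})"
    using Suc.prems(1) by (intro card_partite_homs_Un_part assms(1,2)) auto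
  then have "real (card (partite_homs V E \<pi> W (rep ` {..<Suc t}))) =
               (\<Sum>h\<in>partite_homs V E \<pi> W ?D. real (card (partite_exts V E W ?D t h)))"
    by (simp add: lessThan_Suc Un_commute)
  moreover have "(\<Sum>h\<in>partite_homs V E \<pi> W ?D. L) \<le> \<dots>"
    using Suc.prems(2) by (intro sum_mono) auto
  moreover have "L ^ t * L \<le> (\<Sum>h\<in>partite_homs V E \<pi> W ?D. L)"
    using Suc assms(3) by (simp add: mult_right_mono)
  ultimately show ?case by (simp add: mult.commute)
qed

lemma sum_power_ge_of_sum_ge:
  fixes g :: "'b \<Rightarrow> real" and N c :: real
  assumes "finite X" and "N > 0" and "c > 0" and "\<forall>h\<in>X. 0 \<le> g h \<and> g h \<le> N"
    and "real (card X) \<le> N ^ S" and "c * N ^ (S + 1) \<le> (\<Sum>h\<in>X. g h)"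
  shows "(c / 2) ^ (s + 1) * N ^ (S + s) \<le> (\<Sum>h\<in>X. g h ^ s)"
proof -
  define Y where "Y = {h \<in> X. c / 2 * N \<le> g h}"
  have "Y \<subseteq> X" by (auto simp: Y_def)
  have "(\<Sum>h\<in>X. g h) = (\<Sum>h\<in>Y. g h) + (\<Sum>h\<in>X - Y. g h)"
    using assms(1) \<open>Y \<subseteq> X\<close> by (simp add: sum.subset_diff)
  also have "\<dots> \<le> real (card Y) * N + real (card X) * (c / 2 * N)"
  proof (rule add_mono)
    show "(\<Sum>h\<in>Y. g h) \<le> real (card Y) * N"
      using assms(4) \<open>Y \<subseteq> X\<close> by (intro sum_bounded_above) auto
    have "(\<Sum>h\<in>X - Y. g h) \<le> real (card (X - Y)) * (c / 2 * N)"
      by (intro sum_bounded_above) (auto simp: Y_def)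
    also have "\<dots> \<le> real (card X) * (c / 2 * N)"
      using assms(1-3) by (intro mult_right_mono) (auto intro: card_mono)
    finally show "(\<Sum>h\<in>X - Y. g h) \<le> real (card X) * (c / 2 * N)" .
  qed
  also have "\<dots> \<le> real (card Y) * N + N ^ S * (c / 2 * N)"
    using assms(2,3,5) by (intro add_left_mono mult_right_mono) auto
  finally have "c / 2 * N ^ S * N \<le> real (card Y) * N"
    using assms(6) by (simp add: algebra_simps)
  then have many: "c / 2 * N ^ S \<le> real (card Y)"
    using assms(2) by simp
  have "(c / 2) ^ (s + 1) * N ^ (S + s) = (c / 2 * N ^ S) * (c / 2 * N) ^ s"
    unfolding power_mult_distrib by (simp add: power_add)
  also have "\<dots> \<le> real (card Y) * (c / 2 * N) ^ s"
    using many assms(2,3) by (intro mult_right_mono) auto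
  also have "\<dots> \<le> (\<Sum>h\<in>Y. g h ^ s)"
    using assms(2,3) by (intro sum_bounded_below power_mono) (auto simp: Y_def)
  also have "\<dots> \<le> (\<Sum>h\<in>X. g h ^ s)"
    using assms(1,4) \<open>Y \<subseteq> X\<close> by (intro sum_mono2) auto
  finally show ?thesis .
qed

lemma card_partite_homs_blowup_part:
  assumes "finite V" and "V \<noteq> {}" and "symp E" and "finite D" and "finite B" and "b \<in> B"
    and "\<forall>p\<in>D. \<pi> p \<noteq> i" and "\<forall>q\<in>B. \<pi> q = i" and "c > 0"
    and "c * real (card V) ^ (card D + 1) \<le> real (card (partite_homs V E \<pi> W (D \<union> {b})))"
  shows "(c / 2) ^ (card B + 1) * real (card V) ^ (card D + card B)
           \<le> real (card (partite_homs V E \<pi> W (D \<union> B)))"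
proof -
  let ?g = "\<lambda>h. real (card (partite_exts V E W D i h))"
  have "card (partite_homs V E \<pi> W (D \<union> {b})) =
          (\<Sum>h\<in>partite_homs V E \<pi> W D. card (partite_exts V E W D i h) ^ card {b})"
    using assms by (intro card_partite_homs_Un_part) auto
  then have sum_ge: "c * real (card V) ^ (card D + 1) \<le> (\<Sum>h\<in>partite_homs V E \<pi> W D. ?g h)"
    using assms(10) by simp
  have "(c / 2) ^ (card B + 1) * real (card V) ^ (card D + card B)
               \<le> (\<Sum>h\<in>partite_homs V E \<pi> W D. ?g h ^ card B)"
  proof (rule sum_power_ge_of_sum_ge)
    show "\<forall>h\<in>partite_homs V E \<pi> W D. 0 \<le> ?g h \<and> ?g h \<le> real (card V)"
      by (simp add: card_partite_exts_le assms(1))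
    show "real (card (partite_homs V E \<pi> W D)) \<le> real (card V) ^ card D"
      using card_partite_homs_le[OF assms(4,1)] by (simp flip: of_nat_power)
  qed (use assms(1,2,4,9) sum_ge in \<open>auto simp: finite_partite_homs card_gt_0_iff\<close>)
  also have "\<dots> = real (card (partite_homs V E \<pi> W (D \<union> B)))"
    using card_partite_homs_Un_part[OF assms(4,5,1,3,7,8)] by simp
  finally show ?thesis .
qed

primrec blowup_const :: "real \<Rightarrow> (nat \<Rightarrow> nat) \<Rightarrow> nat \<Rightarrow> real" where
  "blowup_const c a 0 = c"
| "blowup_const c a (Suc l) = (blowup_const c a l / 2) ^ (a l + 1)"

lemma blowup_const_pos: "c > 0 \<Longrightarrow> blowup_const c a l > 0"
  by (induction l) auto

lemma card_partite_homs_blowup: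
  assumes "finite V" and "V \<noteq> {}" and "symp E" and "finite Q" and "\<forall>q\<in>Q. \<pi> q < t"
    and "\<forall>P<t. rep P \<in> Q \<and> \<pi> (rep P) = P" and "c > 0"
    and "c * real (card V) ^ t \<le> real (card (partite_homs V E \<pi> W (rep ` {..<t})))"
  shows "blowup_const c (\<lambda>P. card {q \<in> Q. \<pi> q = P}) t * real (card V) ^ card Q
           \<le> real (card (partite_homs V E \<pi> W Q))"
proof -
  define stage where "stage l = {q \<in> Q. \<pi> q < l} \<union> rep ` {l..<t}" for l
  have "blowup_const c (\<lambda>P. card {q \<in> Q. \<pi> q = P}) l * real (card V) ^ card (stage l)
          \<le> real (card (partite_homs V E \<pi> W (stage l)))" if "l \<le> t" for l
    using that
  proof (induction l)
    case 0
    have "inj_on rep {..<t}" using assms(6) by (metis inj_on_inverseI lessThan_iff)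
    then show ?case
      using assms(8) by (simp add: stage_def card_image atLeast0LessThan)
  next
    case (Suc l)
    define D where "D = {q \<in> Q. \<pi> q < l} \<union> rep ` {Suc l..<t}"
    define B where "B = {q \<in> Q. \<pi> q = l}"
    have "finite D" "finite B" using assms(4) by (simp_all add: D_def B_def)
    have D: "\<forall>p\<in>D. \<pi> p \<noteq> l" using assms(6) by (auto simp: D_def)
    have "rep l \<in> B" using assms(6) Suc.prems by (simp add: B_def)
    have "{l..<t} = insert l {Suc l..<t}" using Suc.prems by auto
    then have "stage l = D \<union> {rep l}" by (auto simp: stage_def D_def)
    moreover have "stage (Suc l) = D \<union> B" by (auto simp: stage_def D_def B_def)
    moreover have "card (D \<union> {rep l}) = card D + 1" "card (D \<union> B) = card D + card B"
      using \<open>finite D\<close> \<open>finite B\<close> \<open>rep l \<in> B\<close> D by (subst card_Un_disjoint; auto simp: B_def)+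
    ultimately show ?case
      using card_partite_homs_blowup_part[OF assms(1-3) \<open>finite D\<close> \<open>finite B\<close> \<open>rep l \<in> B\<close> D]
        Suc blowup_const_pos[OF assms(7)]
      by (simp add: B_def)
  qed
  moreover have "stage t = Q" using assms(5) by (auto simp: stage_def)
  ultimately show ?thesis by fastforce
qed

lemma partite_exts_common_nbhd:
  "partite_exts V E (\<lambda>P. common_nbhd V E (R P)) D i h = common_nbhd V E (h ` D \<union> R i)"
  by (auto simp: partite_exts_def common_nbhd_def)

text \<open>The parts of J_1 other than that of w_1 are numbered in reverse, so that the part of w_2 comes
  last. Its vertices need not be adjacent to m, hence the greedy embedding never has to respect more
  than t vertices.\<close>

definition J1_class :: "nat \<Rightarrow> nat \<Rightarrow> nat \<Rightarrow> nat" where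
  "J1_class k t v = t - J1_part k v"

definition J1_class_rep :: "nat \<Rightarrow> nat \<Rightarrow> nat \<Rightarrow> nat" where
  "J1_class_rep k t P = (t - 1 - P) * k + 2"

lemma J1_part_bounds:
  assumes "k > 0" and "1 \<le> v" and "v \<le> t * k"
  shows "1 \<le> J1_part k v" and "J1_part k v \<le> t"
proof -
  have "(v - 1) div k < t"
    using assms by (simp add: div_less_iff_less_mult)
  then show "1 \<le> J1_part k v" and "J1_part k v \<le> t"
    using assms(2) by (auto simp: J1_part_def)
qed

lemma J1_class_lt:
  "k > 0 \<Longrightarrow> v \<in> {1..t * k} \<Longrightarrow> J1_class k t v < t"
  using J1_part_bounds[of k v t] by (simp add: J1_class_def)

lemma J1_class_eq_iff:
  assumes "k > 0" and "u \<in> {1..t * k}" and "v \<in> {1..t * k}"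
  shows "J1_class k t u = J1_class k t v \<longleftrightarrow> J1_part k u = J1_part k v"
  using J1_part_bounds[of k u t] J1_part_bounds[of k v t] assms
  by (auto simp: J1_class_def)

lemma J1_class_rep_spec:
  assumes "k \<ge> 2" and "P < t"
  shows "J1_class_rep k t P \<in> {2..t * k}" and "J1_class k t (J1_class_rep k t P) = P"
proof -
  have "(t - 1 - P) * k + k \<le> (t - 1) * k + k"
    by (intro add_right_mono mult_right_mono) auto
  also have "\<dots> = t * k"
    using assms(2) by (cases t) auto
  finally show "J1_class_rep k t P \<in> {2..t * k}"
    using assms(1) by (simp add: J1_class_rep_def)
  have "((t - 1 - P) * k + 1) div k = t - 1 - P"
    using assms(1) div_mult_self1[of k 1 "t - 1 - P"] by simp
  then show "J1_class k t (J1_class_rep k t P) = P"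
    using assms(2) by (simp add: J1_class_def J1_class_rep_def J1_part_def)
qed

definition H1_roots :: "nat \<Rightarrow> 'a \<Rightarrow> 'a \<Rightarrow> nat \<Rightarrow> 'a set" where
  "H1_roots t z m P = (if P = t - 1 then {z} else {z, m})"

definition H1_completions ::
  "'a set \<Rightarrow> ('a \<Rightarrow> 'a \<Rightarrow> bool) \<Rightarrow> nat \<Rightarrow> nat \<Rightarrow> 'a \<Rightarrow> 'a \<Rightarrow> (nat \<Rightarrow> 'a) set" where
  "H1_completions V E k t z m =
     partite_homs V E (J1_class k t) (\<lambda>P. common_nbhd V E (H1_roots t z m P)) {2..t * k}"

definition H1_map :: "'a \<Rightarrow> 'a \<Rightarrow> (nat \<Rightarrow> 'a) \<Rightarrow> nat \<Rightarrow> 'a" where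
  "H1_map z m f v = (if v = 0 then z else if v = 1 then m else f v)"

lemma H1_map_edge:
  assumes "symp E" and "k \<ge> 2" and "f \<in> H1_completions V E k t z m" and "H1_adj (t * k) k u v"
  shows "E (H1_map z m f u) (H1_map z m f v)"
proof -
  have f: "\<And>v. v \<in> {2..t * k} \<Longrightarrow> f v \<in> common_nbhd V E (H1_roots t z m (J1_class k t v))"
    and f_edge: "\<And>u v. u \<in> {2..t * k} \<Longrightarrow> v \<in> {2..t * k} \<Longrightarrow> J1_class k t u \<noteq> J1_class k t v
                   \<Longrightarrow> E (f u) (f v)"
    using assms(3) by (auto simp: H1_completions_def partite_homs_def)
  have ordered: "E (H1_map z m f u) (H1_map z m f v)"
    if "u < v" and "v \<le> t * k" and part: "J1_part k u \<noteq> J1_part k v" and "{u, v} \<noteq> {0, 1}" for u v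
  proof -
    have v: "v \<in> {2..t * k}" using that by auto
    have "u = 1 \<Longrightarrow> J1_part k v \<noteq> 1"
      using part by (simp add: J1_part_def)
    then have "u = 1 \<Longrightarrow> J1_class k t v \<noteq> t - 1"
      using J1_part_bounds[of k v t] v assms(2) by (auto simp: J1_class_def)
    moreover have "u = 0 \<or> u = 1 \<or> u \<in> {2..t * k}"
      using that by auto
    ultimately consider "u = 0" | "u = 1" "J1_class k t v \<noteq> t - 1" | "u \<in> {2..t * k}"
      by blast
    then show ?thesis
    proof cases
      case 1
      then show ?thesis using f[OF v] v by (auto simp: H1_map_def H1_roots_def common_nbhd_def)
    next
      case 2
      then show ?thesis using f[OF v] v by (auto simp: H1_map_def H1_roots_def common_nbhd_def)
    next
      case 3
      then have "J1_class k t u \<noteq> J1_class k t v"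
        using J1_class_eq_iff[of k u t v] part v assms(2) by auto
      then show ?thesis using f_edge[OF 3 v] 3 v by (simp add: H1_map_def)
    qed
  qed
  have "u \<noteq> v" and "u \<le> t * k" and "v \<le> t * k" and "J1_part k u \<noteq> J1_part k v" and "{u, v} \<noteq> {0, 1}"
    using assms(4) by (auto simp: H1_adj_def J1_adj_def)
  then show ?thesis
    using ordered[of u v] ordered[of v u] sympD[OF assms(1)] by (metis insert_commute linorder_neqE_nat)
qed

definition H1_density :: "real \<Rightarrow> nat \<Rightarrow> nat \<Rightarrow> real" where
  "H1_density \<gamma> k t = blowup_const (\<gamma> ^ t) (\<lambda>P. card {v \<in> {2..t * k}. J1_class k t v = P}) t"

lemma H1_density_pos: "\<gamma> > 0 \<Longrightarrow> H1_density \<gamma> k t > 0"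
  by (simp add: H1_density_def blowup_const_pos)

lemma card_H1_completions_ge:
  fixes \<gamma> :: real
  assumes G: "simple_graph V E" and "k \<ge> 2" and "t \<ge> 1" and "\<gamma> > 0"
    and deg: "\<forall>v\<in>V. (1 - 1 / real t + \<gamma>) * real (card V) \<le> real (degree V E v)"
    and "z \<in> V" and "m \<in> V"
  shows "H1_density \<gamma> k t * real (card V) ^ (t * k - 1) \<le> real (card (H1_completions V E k t z m))"
proof -
  let ?n = "real (card V)"
  let ?W = "\<lambda>P. common_nbhd V E (H1_roots t z m P)"
  have "finite V" using G by (simp add: simple_graph_def)
  have "symp E" using G by (rule simple_graph_symp)
  have "V \<noteq> {}" using \<open>z \<in> V\<close> by auto
  have exts: "\<gamma> * ?n \<le> real (card (partite_exts V E ?W (J1_class_rep k t ` {..<P}) P h))"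
    if "P < t" and h: "h \<in> partite_homs V E (J1_class k t) ?W (J1_class_rep k t ` {..<P})"
    for P h
  proof -
    let ?S = "h ` J1_class_rep k t ` {..<P} \<union> H1_roots t z m P"
    have "card ?S \<le> card (h ` J1_class_rep k t ` {..<P}) + card (H1_roots t z m P)"
      by (rule card_Un_le)
    also have "\<dots> \<le> P + card (H1_roots t z m P)"
      using card_image_le[of "J1_class_rep k t ` {..<P}" h] card_image_le[of "{..<P}" "J1_class_rep k t"]
      by simp
    also have "\<dots> \<le> t"
      using \<open>P < t\<close> by (auto simp: H1_roots_def card_insert_if)
    finally have "card ?S \<le> t" .
    moreover have "?S \<subseteq> V"
      using h \<open>z \<in> V\<close> \<open>m \<in> V\<close> by (auto simp: partite_homs_def H1_roots_def PiE_iff)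
    ultimately show ?thesis
      using card_common_nbhd_ge_min_degree[OF \<open>finite V\<close> \<open>V \<noteq> {}\<close> _ _ \<open>t \<ge> 1\<close> _ deg] \<open>\<gamma> > 0\<close>
      by (simp add: partite_exts_common_nbhd)
  qed
  have "(\<gamma> * ?n) ^ t \<le> real (card (partite_homs V E (J1_class k t) ?W (J1_class_rep k t ` {..<t})))"
    using \<open>finite V\<close> \<open>symp E\<close> \<open>\<gamma> > 0\<close> J1_class_rep_spec(2)[OF \<open>k \<ge> 2\<close>] exts
    by (intro card_transversal_homs_ge) auto
  then have "H1_density \<gamma> k t * ?n ^ card {2..t * k}
               \<le> real (card (partite_homs V E (J1_class k t) ?W {2..t * k}))"
    unfolding H1_density_def
    using \<open>finite V\<close> \<open>V \<noteq> {}\<close> \<open>symp E\<close> \<open>\<gamma> > 0\<close> \<open>k \<ge> 2\<close>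
      J1_class_rep_spec[OF \<open>k \<ge> 2\<close>] J1_class_lt[of k _ t]
    by (intro card_partite_homs_blowup) (auto simp: power_mult_distrib)
  then show ?thesis
    by (simp add: H1_completions_def)
qed

lemma card_maps_identifying_le:
  assumes "finite A" and "finite V" and "p1 \<in> A" and "p2 \<in> A" and "p1 \<noteq> p2"
    and "z \<in> A - {p1, p2}" and "w \<in> A" and "w \<noteq> z"
  shows "card {\<phi> \<in> A \<rightarrow>\<^sub>E V. \<phi> p1 = x \<and> \<phi> p2 = y \<and> \<phi> z = \<phi> w} \<le> card V ^ (card A - 3)"
proof -
  let ?S = "{\<phi> \<in> A \<rightarrow>\<^sub>E V. \<phi> p1 = x \<and> \<phi> p2 = y \<and> \<phi> z = \<phi> w}"
  let ?U = "A - {p1, p2, z}"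
  have "inj_on (\<lambda>\<phi>. restrict \<phi> ?U) ?S"
  proof (rule inj_onI)
    fix \<phi> \<psi> assume \<phi>: "\<phi> \<in> ?S" and \<psi>: "\<psi> \<in> ?S" and eq: "restrict \<phi> ?U = restrict \<psi> ?U"
    have on_U: "\<phi> s = \<psi> s" if "s \<in> ?U" for s
      using fun_cong[OF eq, of s] that by simp
    have "\<phi> w = \<psi> w"
      using on_U[of w] \<phi> \<psi> assms(7,8) by (cases "w \<in> {p1, p2}") auto
    then have "\<phi> s = \<psi> s" if "s \<in> A" for s
      using on_U[of s] \<phi> \<psi> that by (cases "s \<in> {p1, p2, z}") auto
    then show "\<phi> = \<psi>"
      using \<phi> \<psi> by (intro PiE_ext[of \<phi> A "\<lambda>_. V" \<psi>]) auto
  qed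
  moreover have "(\<lambda>\<phi>. restrict \<phi> ?U) ` ?S \<subseteq> ?U \<rightarrow>\<^sub>E V"
    by (intro image_subsetI) (simp add: restrict_PiE_iff PiE_iff)
  ultimately have "card ?S \<le> card (?U \<rightarrow>\<^sub>E V)"
    using assms(1,2) by (intro card_inj_on_le finite_PiE) auto
  also have "\<dots> = card V ^ (card A - card {p1, p2, z})"
    using assms(1,3,4,6) by (simp add: card_PiE card_Diff_subset)
  also have "card {p1, p2, z} = 3"
    using assms(5,6) by auto
  finally
  show ?thesis .
qed

lemma card_noninjective_maps_le:
  assumes "finite A" and "finite V" and "p1 \<in> A" and "p2 \<in> A" and "p1 \<noteq> p2" and "x \<noteq> y"
  shows "card {\<phi> \<in> A \<rightarrow>\<^sub>E V. \<phi> p1 = x \<and> \<phi> p2 = y \<and> \<not> inj_on \<phi> A}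
           \<le> card A ^ 2 * card V ^ (card A - 3)"
proof -
  let ?S = "\<lambda>z w. {\<phi> \<in> A \<rightarrow>\<^sub>E V. \<phi> p1 = x \<and> \<phi> p2 = y \<and> \<phi> z = \<phi> w}"
  let ?N = "card V ^ (card A - 3)"
  have "{\<phi> \<in> A \<rightarrow>\<^sub>E V. \<phi> p1 = x \<and> \<phi> p2 = y \<and> \<not> inj_on \<phi> A}
          \<subseteq> (\<Union>z\<in>A - {p1, p2}. \<Union>w\<in>A - {z}. ?S z w)"
  proof (rule subsetI)
    fix \<phi> assume "\<phi> \<in> {\<phi> \<in> A \<rightarrow>\<^sub>E V. \<phi> p1 = x \<and> \<phi> p2 = y \<and> \<not> inj_on \<phi> A}"
    then have \<phi>: "\<phi> \<in> A \<rightarrow>\<^sub>E V" "\<phi> p1 = x" "\<phi> p2 = y" "\<not> inj_on \<phi> A" by auto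
    then obtain a b where ab: "a \<in> A" "b \<in> A" "a \<noteq> b" "\<phi> a = \<phi> b"
      by (auto simp: inj_on_def)
    with \<phi> assms(6) have "a \<notin> {p1, p2} \<or> b \<notin> {p1, p2}"
      by auto
    then obtain z w where "z \<in> A - {p1, p2}" "w \<in> A - {z}" "\<phi> z = \<phi> w"
      using ab ab(4)[symmetric] by blast
    with \<phi> show "\<phi> \<in> (\<Union>z\<in>A - {p1, p2}. \<Union>w\<in>A - {z}. ?S z w)"
      by blast
  qed
  moreover have "finite (\<Union>z\<in>A - {p1, p2}. \<Union>w\<in>A - {z}. ?S z w)"
    by (rule finite_subset[of _ "A \<rightarrow>\<^sub>E V"]) (use assms(1,2) in \<open>auto intro: finite_PiE\<close>)
  ultimately have "card {\<phi> \<in> A \<rightarrow>\<^sub>E V. \<phi> p1 = x \<and> \<phi> p2 = y \<and> \<not> inj_on \<phi> A}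
               \<le> card (\<Union>z\<in>A - {p1, p2}. \<Union>w\<in>A - {z}. ?S z w)"
    by (rule card_mono[rotated])
  also have "\<dots> \<le> (\<Sum>z\<in>A - {p1, p2}. \<Sum>w\<in>A - {z}. card (?S z w))"
    using assms(1) by (intro order.trans[OF card_UN_le] sum_mono card_UN_le) auto
  also have "\<dots> \<le> (\<Sum>z\<in>A - {p1, p2}. \<Sum>w\<in>A - {z}. ?N)"
    using assms by (intro sum_mono card_maps_identifying_le) auto
  also have "\<dots> \<le> (\<Sum>z\<in>A. \<Sum>w\<in>A - {z}. ?N)"
    using assms(1) by (intro sum_mono2) auto
  also have "\<dots> \<le> (\<Sum>z\<in>A. \<Sum>w\<in>A. ?N)"
    using assms(1) by (intro sum_mono sum_mono2) auto
  also have "\<dots> = card A ^ 2 * ?N"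
    by (simp add: power2_eq_square)
  finally show ?thesis .
qed

definition hpath_homs ::
  "'a set \<Rightarrow> ('a \<Rightarrow> 'a \<Rightarrow> bool) \<Rightarrow> rgraph list \<Rightarrow> nat \<Rightarrow> 'a \<Rightarrow> 'a \<Rightarrow> ((nat \<times> nat) \<Rightarrow> 'a) set" where
  "hpath_homs V E Hs r x y =
     {\<phi> \<in> hpath_verts Hs r \<rightarrow>\<^sub>E V. (\<forall>a b. hpath_edge Hs r a b \<longrightarrow> E (\<phi> a) (\<phi> b)) \<and>
        \<phi> (hpath_end1 Hs) = x \<and> \<phi> (hpath_end2 Hs) = y}"

lemma card_hpath_embeddings_ge:
  assumes "finite V" and "finite (hpath_verts Hs r)" and "x \<noteq> y"
    and "hpath_end1 Hs \<in> hpath_verts Hs r" and "hpath_end2 Hs \<in> hpath_verts Hs r"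
    and "hpath_end1 Hs \<noteq> hpath_end2 Hs"
  shows "real (card (hpath_homs V E Hs r x y))
           - real (card (hpath_verts Hs r) ^ 2 * card V ^ (card (hpath_verts Hs r) - 3))
         \<le> real (card (hpath_embeddings V E Hs r x y))"
proof -
  let ?A = "hpath_verts Hs r"
  let ?bad = "{\<phi> \<in> ?A \<rightarrow>\<^sub>E V. \<phi> (hpath_end1 Hs) = x \<and> \<phi> (hpath_end2 Hs) = y \<and> \<not> inj_on \<phi> ?A}"
  have fin: "finite {\<phi> \<in> ?A \<rightarrow>\<^sub>E V. P \<phi>}" for P
    by (rule finite_subset[of _ "?A \<rightarrow>\<^sub>E V"]) (use assms(1,2) in \<open>auto intro: finite_PiE\<close>)
  have "hpath_homs V E Hs r x y \<subseteq> hpath_embeddings V E Hs r x y \<union> ?bad"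
    by (auto simp: hpath_homs_def hpath_embeddings_def)
  then have "card (hpath_homs V E Hs r x y) \<le> card (hpath_embeddings V E Hs r x y \<union> ?bad)"
    by (intro card_mono finite_UnI) (simp_all add: hpath_embeddings_def fin)
  also have "\<dots> \<le> card (hpath_embeddings V E Hs r x y) + card ?bad"
    by (rule card_Un_le)
  finally have "card (hpath_homs V E Hs r x y) \<le> card (hpath_embeddings V E Hs r x y) + card ?bad" .
  moreover have "card ?bad \<le> card ?A ^ 2 * card V ^ (card ?A - 3)"
    using assms by (intro card_noninjective_maps_le) auto
  ultimately show ?thesis
    by linarith
qed

lemma hpath_verts_H1_pair:
  "hpath_verts [H1 r k, H1' r k] r = {(c, v). c < 2 \<and> v \<le> r \<and> (c = 1 \<longrightarrow> v \<noteq> 1)}"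
  by (auto simp: hpath_verts_def H1_def H1'_def nth_Cons' less_2_cases_iff)

lemma hpath_ends_H1_pair:
  "hpath_end1 [H1 r k, H1' r k] = (0, 0)" "hpath_end2 [H1 r k, H1' r k] = (1, 0)"
  by (simp_all add: hpath_end1_def hpath_end2_def H1_def H1'_def)

lemma hpath_edge_H1_pairE:
  assumes "hpath_edge [H1 r k, H1' r k] r a b"
  obtains c u v where "c < 2" and "H1_adj r k u v"
    and "a = (if c = 1 \<and> u = 1 then (0, 1) else (c, u))"
    and "b = (if c = 1 \<and> v = 1 then (0, 1) else (c, v))"
proof -
  have rep: "hpath_rep [H1 r k, H1' r k] (c, v) = (if c = 1 \<and> v = 1 then (0, 1) else (c, v))"
    if "c < 2" for c v
    using that by (auto simp: hpath_rep_def H1_def H1'_def less_2_cases_iff)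
  have adj: "radj ([H1 r k, H1' r k] ! c) = H1_adj r k" if "c < 2" for c
    using that by (auto simp: H1_def H1'_def less_2_cases_iff)
  from assms obtain c u v where "c < 2" and "radj ([H1 r k, H1' r k] ! c) u v"
    and "a = hpath_rep [H1 r k, H1' r k] (c, u)" and "b = hpath_rep [H1 r k, H1' r k] (c, v)"
    by (simp add: hpath_edge_def numeral_2_eq_2) blast
  with rep adj show ?thesis
    by (intro that[of c u v]) auto
qed

definition H1_pair_map :: "'a \<Rightarrow> 'a \<Rightarrow> 'a \<Rightarrow> (nat \<Rightarrow> 'a) \<Rightarrow> (nat \<Rightarrow> 'a) \<Rightarrow> nat \<times> nat \<Rightarrow> 'a" where
  "H1_pair_map x y m f g = (\<lambda>(c, v). if c = 0 then H1_map x m f v else H1_map y m g v)"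

lemma H1_completions_PiE: "f \<in> H1_completions V E k t z m \<Longrightarrow> f \<in> {2..t * k} \<rightarrow>\<^sub>E V"
  by (simp add: H1_completions_def partite_homs_def)

lemma H1_pair_map_in_hpath_homs:
  assumes "symp E" and "k \<ge> 2" and "x \<in> V" and "y \<in> V" and "m \<in> V"
    and f: "f \<in> H1_completions V E k t x m" and g: "g \<in> H1_completions V E k t y m"
  shows "restrict (H1_pair_map x y m f g) (hpath_verts [H1 (t * k) k, H1' (t * k) k] (t * k))
           \<in> hpath_homs V E [H1 (t * k) k, H1' (t * k) k] (t * k) x y"
proof -
  let ?Hs = "[H1 (t * k) k, H1' (t * k) k]"
  let ?\<phi> = "restrict (H1_pair_map x y m f g) (hpath_verts ?Hs (t * k))"
  have "H1_map z m h v \<in> V" if "z \<in> V" "h \<in> H1_completions V E k t z m" "v \<le> t * k" for z h v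
    using that \<open>m \<in> V\<close> H1_completions_PiE[OF that(2)] by (auto simp: H1_map_def)
  then have "?\<phi> \<in> hpath_verts ?Hs (t * k) \<rightarrow>\<^sub>E V"
    using f g assms(3,4) by (auto simp: hpath_verts_H1_pair H1_pair_map_def)
  moreover have "E (?\<phi> a) (?\<phi> b)" if "hpath_edge ?Hs (t * k) a b" for a b
  proof -
    \<comment> \<open>the shared vertex \<open>(0, 1)\<close>, standing for \<open>(1, 1)\<close> of the second copy, goes to \<open>m\<close> either way\<close>
    have at_rep: "?\<phi> (if c = 1 \<and> u = 1 then (0, 1) else (c, u))
                   = (if c = 0 then H1_map x m f u else H1_map y m g u)" if "c < 2" "u \<le> t * k" for c u
      using that by (auto simp: hpath_verts_H1_pair H1_pair_map_def H1_map_def less_2_cases_iff)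
    from that obtain c u v where "c < 2" and adj: "H1_adj (t * k) k u v"
      and "a = (if c = 1 \<and> u = 1 then (0, 1) else (c, u))"
      and "b = (if c = 1 \<and> v = 1 then (0, 1) else (c, v))"
      by (rule hpath_edge_H1_pairE)
    moreover have "u \<le> t * k" "v \<le> t * k" using adj by (simp_all add: H1_adj_def J1_adj_def)
    ultimately show ?thesis
      using at_rep H1_map_edge[OF assms(1,2) f adj] H1_map_edge[OF assms(1,2) g adj] by auto
  qed
  moreover have "?\<phi> (0, 0) = x" "?\<phi> (1, 0) = y"
    by (simp_all add: hpath_verts_H1_pair H1_pair_map_def H1_map_def)
  ultimately show ?thesis
    by (simp add: hpath_homs_def hpath_ends_H1_pair)
qed

lemma inj_on_H1_pair_map:
  assumes "k \<ge> 2" and "t \<ge> 1"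
  shows "inj_on
           (\<lambda>(m, f, g). restrict (H1_pair_map x y m f g) (hpath_verts [H1 (t * k) k, H1' (t * k) k] (t * k)))
           (SIGMA m:V. H1_completions V E k t x m \<times> H1_completions V E k t y m)"
proof (rule inj_onI, clarsimp)
  let ?A = "hpath_verts [H1 (t * k) k, H1' (t * k) k] (t * k)"
  fix m f g m' f' g'
  assume "f \<in> H1_completions V E k t x m" "g \<in> H1_completions V E k t y m"
    "f' \<in> H1_completions V E k t x m'" "g' \<in> H1_completions V E k t y m'"
    and eq: "restrict (H1_pair_map x y m f g) ?A = restrict (H1_pair_map x y m' f' g') ?A"
  have at: "H1_pair_map x y m f g (c, v) = H1_pair_map x y m' f' g' (c, v)"
    if "c < 2" "v \<le> t * k" "c = 1 \<longrightarrow> v \<noteq> 1" for c v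
    using fun_cong[OF eq, of "(c, v)"] that by (simp add: hpath_verts_H1_pair)
  have "1 \<le> t * k" using assms by (simp add: Suc_le_eq)
  then have "m = m'"
    using at[of 0 1] by (simp add: H1_pair_map_def H1_map_def)
  moreover have "f = f'"
  proof (rule PiE_ext[OF H1_completions_PiE[OF \<open>f \<in> _\<close>] H1_completions_PiE[OF \<open>f' \<in> _\<close>]])
    fix v assume "v \<in> {2..t * k}"
    then show "f v = f' v" using at[of 0 v] by (simp add: H1_pair_map_def H1_map_def)
  qed
  moreover have "g = g'"
  proof (rule PiE_ext[OF H1_completions_PiE[OF \<open>g \<in> _\<close>] H1_completions_PiE[OF \<open>g' \<in> _\<close>]])
    fix v assume "v \<in> {2..t * k}"
    then show "g v = g' v" using at[of 1 v] by (simp add: H1_pair_map_def H1_map_def)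
  qed
  ultimately show "m = m' \<and> f = f' \<and> g = g'" by blast
qed

lemma finite_hpath_verts_H1_pair: "finite (hpath_verts [H1 r k, H1' r k] r)"
  by (rule finite_subset[of _ "{..<2} \<times> {..r}"]) (auto simp: hpath_verts_H1_pair)

lemma card_hpath_homs_H1_pair_ge:
  assumes "symp E" and "finite V" and "k \<ge> 2" and "t \<ge> 1" and "x \<in> V" and "y \<in> V"
  shows "(\<Sum>m\<in>V. card (H1_completions V E k t x m) * card (H1_completions V E k t y m))
           \<le> card (hpath_homs V E [H1 (t * k) k, H1' (t * k) k] (t * k) x y)"
proof -
  let ?Hs = "[H1 (t * k) k, H1' (t * k) k]"
  let ?X = "SIGMA m:V. H1_completions V E k t x m \<times> H1_completions V E k t y m"
  have "finite (hpath_homs V E ?Hs (t * k) x y)"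
    by (rule finite_subset[of _ "hpath_verts ?Hs (t * k) \<rightarrow>\<^sub>E V"])
       (auto simp: hpath_homs_def assms(2) finite_hpath_verts_H1_pair intro: finite_PiE)
  moreover have "(\<lambda>(m, f, g). restrict (H1_pair_map x y m f g) (hpath_verts ?Hs (t * k))) ` ?X
                   \<subseteq> hpath_homs V E ?Hs (t * k) x y"
    by (auto intro!: H1_pair_map_in_hpath_homs[OF assms(1,3,5,6)])
  ultimately have "card ?X \<le> card (hpath_homs V E ?Hs (t * k) x y)"
    by (intro card_inj_on_le[OF inj_on_H1_pair_map[OF assms(3,4)]])
  moreover have "card ?X = (\<Sum>m\<in>V. card (H1_completions V E k t x m) * card (H1_completions V E k t y m))"
    using assms(2) by (simp add: card_cartesian_product H1_completions_def finite_partite_homs)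
  ultimately show ?thesis by simp
qed

lemma card_hpath_verts_H1_pair:
  assumes "r \<ge> 1"
  shows "card (hpath_verts [H1 r k, H1' r k] r) = 2 * r + 1"
proof -
  have "hpath_verts [H1 r k, H1' r k] r = {0} \<times> {..r} \<union> {1} \<times> ({..r} - {1})"
    by (auto simp: hpath_verts_H1_pair less_2_cases_iff)
  moreover have "card ({0::nat} \<times> {..r} \<union> {1} \<times> ({..r} - {1})) = (r + 1) + r"
    using assms by (subst card_Un_disjoint) (auto simp: card_cartesian_product)
  ultimately show ?thesis by simp
qed

lemma card_hpath_homs_H1_pair_ge_density:
  fixes \<gamma> :: real
  assumes G: "simple_graph V E" and "k \<ge> 2" and "t \<ge> 1" and "\<gamma> > 0"
    and deg: "\<forall>v\<in>V. (1 - 1 / real t + \<gamma>) * real (card V) \<le> real (degree V E v)"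
    and "x \<in> V" and "y \<in> V"
  shows "H1_density \<gamma> k t ^ 2 * real (card V) ^ (2 * (t * k) - 1)
           \<le> real (card (hpath_homs V E [H1 (t * k) k, H1' (t * k) k] (t * k) x y))"
proof -
  let ?n = "real (card V)" and ?r = "t * k" and ?c = "H1_density \<gamma> k t"
  have "finite V" using G by (simp add: simple_graph_def)
  have "symp E" using G by (rule simple_graph_symp)
  have "?r \<ge> 2" using \<open>k \<ge> 2\<close> \<open>t \<ge> 1\<close> by (metis le_trans mult_1 mult_le_mono1)
  have "?c > 0" using \<open>\<gamma> > 0\<close> by (rule H1_density_pos)
  have compl: "?c * ?n ^ (?r - 1) \<le> real (card (H1_completions V E k t z m))" if "z \<in> V" "m \<in> V" for z m
    by (rule card_H1_completions_ge[OF G \<open>k \<ge> 2\<close> \<open>t \<ge> 1\<close> \<open>\<gamma> > 0\<close> deg that])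
  have "2 * ?r - 1 = Suc ((?r - 1) + (?r - 1))" using \<open>?r \<ge> 2\<close> by simp
  then have "?c ^ 2 * ?n ^ (2 * ?r - 1) = (\<Sum>m\<in>V. (?c * ?n ^ (?r - 1)) * (?c * ?n ^ (?r - 1)))"
    by (simp add: power_add power2_eq_square algebra_simps)
  also have "\<dots> \<le> (\<Sum>m\<in>V. real (card (H1_completions V E k t x m))
                         * real (card (H1_completions V E k t y m)))"
    using compl \<open>x \<in> V\<close> \<open>y \<in> V\<close> \<open>?c > 0\<close> by (intro sum_mono mult_mono) auto
  also have "\<dots> \<le> real (card (hpath_homs V E [H1 ?r k, H1' ?r k] ?r x y))"
    using card_hpath_homs_H1_pair_ge[OF \<open>symp E\<close> \<open>finite V\<close> \<open>k \<ge> 2\<close> \<open>t \<ge> 1\<close> \<open>x \<in> V\<close> \<open>y \<in> V\<close>]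
    by (simp flip: of_nat_mult of_nat_sum)
  finally show ?thesis .
qed

lemma reachable_H1_pair:
  fixes \<gamma> :: real
  assumes G: "simple_graph V E" and "k \<ge> 2" and "t \<ge> 1" and "\<gamma> > 0"
    and deg: "\<forall>v\<in>V. (1 - 1 / real t + \<gamma>) * real (card V) \<le> real (degree V E v)"
    and "x \<in> V" and "y \<in> V" and "x \<noteq> y"
    and large: "2 * real (2 * (t * k) + 1) ^ 2 \<le> H1_density \<gamma> k t ^ 2 * real (card V)"
  shows "reachable V E [H1 (t * k) k, H1' (t * k) k] (t * k) (H1_density \<gamma> k t ^ 2 / 2) x y"
proof -
  let ?n = "real (card V)" and ?r = "t * k" and ?c = "H1_density \<gamma> k t"
  let ?Hs = "[H1 ?r k, H1' ?r k]"
  have "finite V" using G by (simp add: simple_graph_def)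
  have "?r \<ge> 2" using \<open>k \<ge> 2\<close> \<open>t \<ge> 1\<close> by (metis le_trans mult_1 mult_le_mono1)
  have "hpath_end1 ?Hs \<in> hpath_verts ?Hs ?r" "hpath_end2 ?Hs \<in> hpath_verts ?Hs ?r"
    by (simp_all add: hpath_ends_H1_pair hpath_verts_H1_pair)
  moreover have "card (hpath_verts ?Hs ?r) = 2 * ?r + 1"
    using \<open>?r \<ge> 2\<close> by (intro card_hpath_verts_H1_pair) linarith
  ultimately have "real (card (hpath_homs V E ?Hs ?r x y)) - real (2 * ?r + 1) ^ 2 * ?n ^ (2 * ?r - 2)
                     \<le> real (card (hpath_embeddings V E ?Hs ?r x y))"
    using card_hpath_embeddings_ge[OF \<open>finite V\<close> finite_hpath_verts_H1_pair[of ?r k] \<open>x \<noteq> y\<close>]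
    by (simp add: hpath_ends_H1_pair)
  moreover have "real (2 * ?r + 1) ^ 2 * ?n ^ (2 * ?r - 2) \<le> ?c ^ 2 / 2 * ?n ^ (2 * ?r - 1)"
  proof -
    have "2 * ?r - 1 = Suc (2 * ?r - 2)" using \<open>?r \<ge> 2\<close> by simp
    then show ?thesis
      using mult_right_mono[OF large, of "?n ^ (2 * ?r - 2)"] by simp
  qed
  ultimately have "?c ^ 2 / 2 * ?n ^ (2 * ?r - 1) \<le> real (card (hpath_embeddings V E ?Hs ?r x y))"
    using card_hpath_homs_H1_pair_ge_density[OF G \<open>k \<ge> 2\<close> \<open>t \<ge> 1\<close> \<open>\<gamma> > 0\<close> deg \<open>x \<in> V\<close> \<open>y \<in> V\<close>]
    by linarith
  then show ?thesis
    by (simp add: reachable_def mult_2)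
qed

theorem proposition6p6:
  fixes \<gamma> :: real and r k :: nat
  assumes "\<gamma> > 0" and "2 \<le> k" and "k \<le> r" and "k dvd r"
  shows "\<exists>\<beta>>0. \<exists>n0. \<forall>n\<ge>n0. \<forall>(V :: nat set) E.
           simple_graph V E \<and> card V = n \<and>
           (\<forall>v\<in>V. real (degree V E v) \<ge> (1 - real k / real r + \<gamma>) * real n)
           \<longrightarrow> (\<forall>x\<in>V. \<forall>y\<in>V. x \<noteq> y \<longrightarrow> reachable V E [H1 r k, H1' r k] r \<beta> x y)"
proof -
  obtain t where r: "r = t * k" using \<open>k dvd r\<close> by (metis dvd_div_mult_self)
  have "t \<ge> 1" using r assms(2,3) by (cases t) auto
  have kr: "real k / real r = 1 / real t" using r assms(2) by simp
  define c where "c = H1_density \<gamma> k t"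
  have "c > 0" using \<open>\<gamma> > 0\<close> by (simp add: c_def H1_density_pos)
  have "reachable V E [H1 r k, H1' r k] r (c\<^sup>2 / 2) x y"
    if n: "nat \<lceil>2 * real (2 * r + 1) ^ 2 / c\<^sup>2\<rceil> \<le> card V" and G: "simple_graph V E"
      and deg: "\<forall>v\<in>V. (1 - real k / real r + \<gamma>) * real (card V) \<le> real (degree V E v)"
      and "x \<in> V" "y \<in> V" "x \<noteq> y" for V :: "nat set" and E x y
  proof -
    have "2 * real (2 * r + 1) ^ 2 / c\<^sup>2 \<le> real (card V)"
      using n by linarith
    then have "2 * real (2 * r + 1) ^ 2 \<le> c\<^sup>2 * real (card V)"
      using \<open>c > 0\<close> by (simp add: field_simps)
    then show ?thesis
      using reachable_H1_pair[OF G \<open>k \<ge> 2\<close> \<open>t \<ge> 1\<close> \<open>\<gamma> > 0\<close> _ \<open>x \<in> V\<close> \<open>y \<in> V\<close> \<open>x \<noteq> y\<close>]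
        deg kr r by (simp add: c_def)
  qed
  then show ?thesis
    using \<open>c > 0\<close>
    by (intro exI[of _ "c\<^sup>2 / 2"] conjI exI[of _ "nat \<lceil>2 * real (2 * r + 1) ^ 2 / c\<^sup>2\<rceil>"]) auto
qed

end
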